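(* Let $b$ be a real number with $|b|>1$, let $r$ be a nonnegative integer, and let $(b_n)_{n\ge1}$ be a real sequence with $b_n\to b$. Then $$\lim_{n\to\infty}\frac1n\,{}_4F_3\!\left[\begin{matrix}1,\ n+\frac12,\ 1-n,\ b_nn+r\\ n+1,\ \frac32-n,\ b_nn+r+1\end{matrix};1\right]=\frac{2b}{b+1}\sqrt{\frac{b+1}{b-1}}\arctan\Big(\sqrt{\frac{b-1}{b+1}}\Big).$$
   Context: ${}_pF_q\left[\begin{matrix}a_1,\dots,a_p\\ b_1,\dots,b_q\end{matrix};z\right]=\sum_{k\ge0}\frac{(a_1)_k\cdots(a_p)_k}{(b_1)_k\cdots(b_q)_k}\frac{z^k}{k!}$ with $(a)_k=a(a+1)\cdots(a+k-1)$, $(a)_0=1$; here the series terminates because of the numerator parameter $1-n$, i.e. it is the finite sum over $0\le k\le n-1$. *)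

theory Defs
  imports Complex_Main
begin

definition hyp_term :: "real list \<Rightarrow> real list \<Rightarrow> real \<Rightarrow> nat \<Rightarrow> real" where
  "hyp_term as bs z k =
     (\<Prod>a\<leftarrow>as. pochhammer a k) / (\<Prod>b\<leftarrow>bs. pochhammer b k) * z ^ k / fact k"

text \<open>Terminating hypergeometric sum: the sum of the terms with 0 \<le> k \<le> N - 1
(used when some numerator parameter equals 1 - N, so all later terms vanish).\<close>
definition hyp_sum :: "real list \<Rightarrow> real list \<Rightarrow> real \<Rightarrow> nat \<Rightarrow> real" where
  "hyp_sum as bs z N = (\<Sum>k<N. hyp_term as bs z k)"

end

(*
  Write rho(a, k) = (a + 1/2)_k / (a + 1)_k. Reflecting (1 - n)_k / (3/2 - n)_k, the k-th term of
  the series is c/(c + k) * rho(n, k) / rho(n - k - 1, k) with c = b_n n + r, and rho(a, k)^2 is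
  squeezed between (a + 1/4)/(a + k + 1/4) and (a + 1/2)/(a + k + 1/2). Hence at k = floor(x n) the
  term tends to b / ((b + x) sqrt(1 - x^2)), and it is bounded by a constant times 1/sqrt(1 - x).
  Reading (1/n) * sum_k as the integral of a step function on [0, 1), dominated convergence turns
  the limit into the integral of b / ((b + x) sqrt(1 - x^2)) over (0, 1), which the substitution
  u = sqrt((1 - x)/(1 + x)) evaluates to the arctan expression.
*)

theory Submission
  imports Defs "HOL-Analysis.Analysis"
begin

definition poch_half_ratio :: "real \<Rightarrow> nat \<Rightarrow> real" where
  "poch_half_ratio a k = pochhammer (a + 1/2) k / pochhammer (a + 1) k"

lemma poch_half_ratio_0 [simp]: "poch_half_ratio a 0 = 1"
  by (simp add: poch_half_ratio_def)

lemma poch_half_ratio_Suc: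
  "poch_half_ratio a (Suc k) = poch_half_ratio a k * ((a + real k + 1/2) / (a + real k + 1))"
  by (simp add: poch_half_ratio_def pochhammer_Suc algebra_simps)

lemma half_step_factor_bounds:
  fixes t :: real
  assumes "0 \<le> t"
  shows "(t + 1/4) / (t + 5/4) \<le> ((t + 1/2) / (t + 1))\<^sup>2"
    and "((t + 1/2) / (t + 1))\<^sup>2 \<le> (t + 1/2) / (t + 3/2)"
proof -
  have "0 < (t + 1) * (t + 1)" "0 < t + 5/4" "0 < t + 3/2"
    using assms by simp_all
  then show "(t + 1/4) / (t + 5/4) \<le> ((t + 1/2) / (t + 1))\<^sup>2"
    and "((t + 1/2) / (t + 1))\<^sup>2 \<le> (t + 1/2) / (t + 3/2)"
    using assms by (simp_all add: power_divide divide_le_eq le_divide_eq power2_eq_square algebra_simps)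
qed

text \<open>With \<open>1/4\<close> instead of \<open>0\<close> the lower bound stays useful at \<open>a = 0\<close>, i.e. for the
  last term \<open>k = n - 1\<close> of the series.\<close>

lemma poch_half_ratio_bounds:
  assumes "0 \<le> a"
  shows "0 < poch_half_ratio a k"
    and "(a + 1/4) / (a + real k + 1/4) \<le> (poch_half_ratio a k)\<^sup>2"
    and "(poch_half_ratio a k)\<^sup>2 \<le> (a + 1/2) / (a + real k + 1/2)"
proof (induction k)
  case 0
  show "0 < poch_half_ratio a 0" "(a + 1/4) / (a + real 0 + 1/4) \<le> (poch_half_ratio a 0)\<^sup>2"
    "(poch_half_ratio a 0)\<^sup>2 \<le> (a + 1/2) / (a + real 0 + 1/2)"
    using assms by simp_all
next
  case (Suc k)
  define t where "t = a + real k"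
  define q where "q = (t + 1/2) / (t + 1)"
  have "0 \<le> t" "0 < q"
    using assms by (simp_all add: t_def q_def)
  have step: "poch_half_ratio a (Suc k) = poch_half_ratio a k * q"
    by (simp add: poch_half_ratio_Suc t_def q_def)
  show "0 < poch_half_ratio a (Suc k)"
    unfolding step using Suc.IH(1) \<open>0 < q\<close> by simp
  have "(a + 1/4) / (a + real (Suc k) + 1/4) = (a + 1/4) / (t + 1/4) * ((t + 1/4) / (t + 5/4))"
    using assms by (simp add: t_def)
  also have "\<dots> \<le> (poch_half_ratio a k)\<^sup>2 * q\<^sup>2"
    using Suc.IH(2) half_step_factor_bounds(1)[OF \<open>0 \<le> t\<close>] assms \<open>0 \<le> t\<close>
    by (intro mult_mono) (auto simp: t_def q_def)
  finally show "(a + 1/4) / (a + real (Suc k) + 1/4) \<le> (poch_half_ratio a (Suc k))\<^sup>2"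
    by (simp add: step power_mult_distrib)
  have "(poch_half_ratio a (Suc k))\<^sup>2 = (poch_half_ratio a k)\<^sup>2 * q\<^sup>2"
    by (simp add: step power_mult_distrib)
  also have "\<dots> \<le> (a + 1/2) / (t + 1/2) * ((t + 1/2) / (t + 3/2))"
    using Suc.IH(3) half_step_factor_bounds(2)[OF \<open>0 \<le> t\<close>] assms \<open>0 \<le> t\<close>
    by (intro mult_mono) (auto simp: t_def q_def)
  also have "\<dots> = (a + 1/2) / (a + real (Suc k) + 1/2)"
    using \<open>0 \<le> t\<close> by (simp add: t_def)
  finally show "(poch_half_ratio a (Suc k))\<^sup>2 \<le> (a + 1/2) / (a + real (Suc k) + 1/2)" .
qed

lemma poch_half_ratio_le_1:
  assumes "0 \<le> a"
  shows "poch_half_ratio a k \<le> 1"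
proof -
  have "(a + 1/2) / (a + real k + 1/2) \<le> 1"
    using assms by simp
  then have "(poch_half_ratio a k)\<^sup>2 \<le> 1"
    using poch_half_ratio_bounds(3)[OF assms, of k] by linarith
  then show ?thesis
    using poch_half_ratio_bounds(1)[OF assms, of k] by (simp add: power_le_one_iff)
qed

lemma inverse_poch_half_ratio_le:
  assumes "0 \<le> a"
  shows "inverse (poch_half_ratio a k) \<le> sqrt ((a + real k + 1/4) / (a + 1/4))"
proof (rule real_le_rsqrt)
  have "(a + 1/4) / (a + real k + 1/4) \<le> (poch_half_ratio a k)\<^sup>2"
    by (rule poch_half_ratio_bounds(2)[OF assms])
  then have "inverse ((poch_half_ratio a k)\<^sup>2) \<le> inverse ((a + 1/4) / (a + real k + 1/4))"
    using assms by (intro le_imp_inverse_le) auto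
  then show "(inverse (poch_half_ratio a k))\<^sup>2 \<le> (a + real k + 1/4) / (a + 1/4)"
    by (simp add: power_inverse)
qed

lemma pochhammer_divide_pochhammer_plus_1:
  fixes c :: "'a :: field_char_0"
  assumes "\<And>j. j \<le> k \<Longrightarrow> c + of_nat j \<noteq> 0"
  shows "pochhammer c k / pochhammer (c + 1) k = c / (c + of_nat k)"
proof -
  have "pochhammer (c + 1) k \<noteq> 0"
  proof
    assume "pochhammer (c + 1) k = 0"
    then obtain j where "j < k" "c + 1 = - of_nat j"
      by (auto simp: pochhammer_eq_0_iff)
    then have "c + of_nat (Suc j) = 0"
      by (simp add: eq_neg_iff_add_eq_0 algebra_simps)
    with \<open>j < k\<close> show False
      using assms[of "Suc j"] by simp
  qed
  moreover have "pochhammer c k * (c + of_nat k) = c * pochhammer (c + 1) k"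
    using pochhammer_Suc[of c k] pochhammer_rec[of c k] by simp
  ultimately show ?thesis
    using assms[of k] by (simp add: field_simps)
qed

lemma pochhammer_reflect_divide:
  fixes m :: real
  shows "pochhammer (1 - m) k / pochhammer (3/2 - m) k = inverse (poch_half_ratio (m - real k - 1) k)"
proof -
  have "pochhammer (1 - m) k = (- 1) ^ k * pochhammer (m - real k - 1 + 1) k"
    using pochhammer_minus[of "m - 1" k] by (simp add: algebra_simps)
  moreover have "pochhammer (3/2 - m) k = (- 1) ^ k * pochhammer (m - real k - 1 + 1/2) k"
    using pochhammer_minus[of "m - 3/2" k] by (simp add: algebra_simps)
  ultimately show ?thesis
    by (simp add: poch_half_ratio_def)
qed

lemma hyp_term_eq_poch_half_ratio:
  fixes m c :: real
  assumes "\<And>j. j \<le> k \<Longrightarrow> c + real j \<noteq> 0"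
  shows "hyp_term [1, m + 1/2, 1 - m, c] [m + 1, 3/2 - m, c + 1] 1 k
           = c / (c + real k) * poch_half_ratio m k / poch_half_ratio (m - real k - 1) k"
proof -
  have "hyp_term [1, m + 1/2, 1 - m, c] [m + 1, 3/2 - m, c + 1] 1 k
     = (pochhammer 1 k / fact k) * (pochhammer (m + 1/2) k / pochhammer (m + 1) k)
       * (pochhammer (1 - m) k / pochhammer (3/2 - m) k) * (pochhammer c k / pochhammer (c + 1) k)"
    by (simp add: hyp_term_def times_divide_times_eq mult_ac)
  also have "\<dots> = c / (c + real k) * poch_half_ratio m k / poch_half_ratio (m - real k - 1) k"
    using pochhammer_divide_pochhammer_plus_1[OF assms]
    unfolding pochhammer_reflect_divide poch_half_ratio_def[symmetric] pochhammer_fact[symmetric]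
    by (simp add: divide_inverse mult_ac)
  finally show ?thesis .
qed

lemma nat_floor_mult_less:
  fixes x :: real
  assumes "0 < n" "x < 1"
  shows "nat \<lfloor>x * real n\<rfloor> < n"
proof -
  have "\<lfloor>x * real n\<rfloor> < int n"
    using assms by (simp add: floor_less_iff)
  then show ?thesis
    using assms(1) by linarith
qed

lemma nat_floor_mult_divide_tendsto:
  fixes x :: real
  assumes "0 \<le> x"
  shows "(\<lambda>n. real (nat \<lfloor>x * real n\<rfloor>) / real n) \<longlonglongrightarrow> x"
proof (rule tendsto_sandwich)
  show "eventually (\<lambda>n. x - 1 / real n \<le> real (nat \<lfloor>x * real n\<rfloor>) / real n) sequentially"
    using eventually_gt_at_top[of 0]
  proof eventually_elim
    case (elim n)
    have "x * real n - 1 \<le> real (nat \<lfloor>x * real n\<rfloor>)"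
      using assms by linarith
    then have "(x * real n - 1) / real n \<le> real (nat \<lfloor>x * real n\<rfloor>) / real n"
      by (rule divide_right_mono) simp
    then show ?case
      using elim by (simp add: diff_divide_distrib)
  qed
  show "eventually (\<lambda>n. real (nat \<lfloor>x * real n\<rfloor>) / real n \<le> x) sequentially"
    using eventually_gt_at_top[of 0]
    by eventually_elim (use assms of_nat_floor[of "x * _"] in \<open>simp add: divide_le_eq\<close>)
  show "(\<lambda>n. x - 1 / real n) \<longlonglongrightarrow> x"
    using tendsto_diff[OF tendsto_const lim_inverse_n'] by simp
qed simp

lemma tendsto_shifted_ratio:
  fixes a :: "nat \<Rightarrow> real" and k :: "nat \<Rightarrow> nat"
  assumes a: "(\<lambda>n. a n / real n) \<longlonglongrightarrow> \<alpha>" and k: "(\<lambda>n. real (k n) / real n) \<longlonglongrightarrow> x"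
    and "\<alpha> + x \<noteq> 0"
  shows "(\<lambda>n. (a n + c) / (a n + real (k n) + c)) \<longlonglongrightarrow> \<alpha> / (\<alpha> + x)"
proof -
  have "(\<lambda>n. (a n / real n + c * inverse (real n)) / (a n / real n + real (k n) / real n + c * inverse (real n)))
          \<longlonglongrightarrow> (\<alpha> + c * 0) / (\<alpha> + x + c * 0)"
    using assms by (intro tendsto_intros lim_inverse_n) auto
  moreover have "eventually (\<lambda>n.
      (a n / real n + c * inverse (real n)) / (a n / real n + real (k n) / real n + c * inverse (real n))
        = (a n + c) / (a n + real (k n) + c)) sequentially"
    using eventually_gt_at_top[of 0]
    by eventually_elim (auto simp: add_divide_distrib[symmetric] inverse_eq_divide)
  ultimately show ?thesis
    by (simp add: Lim_transform_eventually)
qed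

lemma poch_half_ratio_tendsto:
  fixes a :: "nat \<Rightarrow> real" and k :: "nat \<Rightarrow> nat"
  assumes nonneg: "eventually (\<lambda>n. 0 \<le> a n) sequentially"
    and "(\<lambda>n. a n / real n) \<longlonglongrightarrow> \<alpha>" and "(\<lambda>n. real (k n) / real n) \<longlonglongrightarrow> x"
    and "\<alpha> + x \<noteq> 0"
  shows "(\<lambda>n. poch_half_ratio (a n) (k n)) \<longlonglongrightarrow> sqrt (\<alpha> / (\<alpha> + x))"
proof -
  have "(\<lambda>n. (poch_half_ratio (a n) (k n))\<^sup>2) \<longlonglongrightarrow> \<alpha> / (\<alpha> + x)"
  proof (rule tendsto_sandwich)
    show "eventually (\<lambda>n. (a n + 1/4) / (a n + real (k n) + 1/4) \<le> (poch_half_ratio (a n) (k n))\<^sup>2) sequentially"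
      using nonneg by eventually_elim (rule poch_half_ratio_bounds)
    show "eventually (\<lambda>n. (poch_half_ratio (a n) (k n))\<^sup>2 \<le> (a n + 1/2) / (a n + real (k n) + 1/2)) sequentially"
      using nonneg by eventually_elim (rule poch_half_ratio_bounds)
  qed (use assms in \<open>auto intro: tendsto_shifted_ratio\<close>)
  then have "(\<lambda>n. sqrt ((poch_half_ratio (a n) (k n))\<^sup>2)) \<longlonglongrightarrow> sqrt (\<alpha> / (\<alpha> + x))"
    by (rule tendsto_real_sqrt)
  moreover have "eventually (\<lambda>n. sqrt ((poch_half_ratio (a n) (k n))\<^sup>2) = poch_half_ratio (a n) (k n)) sequentially"
    using nonneg by eventually_elim (simp add: poch_half_ratio_bounds(1) less_imp_le)
  ultimately show ?thesis
    by (rule Lim_transform_eventually)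
qed

lemma poch_half_ratio_floor_tendsto:
  fixes x :: real
  assumes x: "0 \<le> x" "x < 1"
  shows "(\<lambda>n. poch_half_ratio (real n) (nat \<lfloor>x * real n\<rfloor>)) \<longlonglongrightarrow> sqrt (1 / (1 + x))"
    and "(\<lambda>n. poch_half_ratio (real n - real (nat \<lfloor>x * real n\<rfloor>) - 1) (nat \<lfloor>x * real n\<rfloor>))
           \<longlonglongrightarrow> sqrt (1 - x)"
proof -
  define K where "K n = nat \<lfloor>x * real n\<rfloor>" for n
  have K: "(\<lambda>n. real (K n) / real n) \<longlonglongrightarrow> x"
    unfolding K_def using x by (intro nat_floor_mult_divide_tendsto)
  have "(\<lambda>n. real n / real n) \<longlonglongrightarrow> 1"
    by (rule Lim_transform_eventually[OF tendsto_const]) (use eventually_gt_at_top[of 0] in \<open>eventually_elim, simp\<close>)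
  then have "(\<lambda>n. poch_half_ratio (real n) (K n)) \<longlonglongrightarrow> sqrt (1 / (1 + x))"
    using K x by (intro poch_half_ratio_tendsto) auto
  then show "(\<lambda>n. poch_half_ratio (real n) (nat \<lfloor>x * real n\<rfloor>)) \<longlonglongrightarrow> sqrt (1 / (1 + x))"
    unfolding K_def .
  have "(\<lambda>n. 1 - real (K n) / real n - inverse (real n)) \<longlonglongrightarrow> 1 - x"
    using tendsto_diff[OF tendsto_diff[OF tendsto_const K] lim_inverse_n] by simp
  then have "(\<lambda>n. (real n - real (K n) - 1) / real n) \<longlonglongrightarrow> 1 - x"
    by (rule Lim_transform_eventually)
      (use eventually_gt_at_top[of 0] in \<open>eventually_elim, simp add: diff_divide_distrib inverse_eq_divide\<close>)
  moreover have "eventually (\<lambda>n. 0 \<le> real n - real (K n) - 1) sequentially"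
    using eventually_gt_at_top[of 0]
  proof eventually_elim
    case (elim n)
    then have "K n + 1 \<le> n"
      unfolding K_def using x nat_floor_mult_less by (simp add: Suc_le_eq)
    then have "real (K n + 1) \<le> real n"
      by (rule of_nat_mono)
    then show ?case
      by simp
  qed
  ultimately have "(\<lambda>n. poch_half_ratio (real n - real (K n) - 1) (K n)) \<longlonglongrightarrow> sqrt (1 - x)"
    using K poch_half_ratio_tendsto[of "\<lambda>n. real n - real (K n) - 1" "1 - x" K x] by simp
  then show "(\<lambda>n. poch_half_ratio (real n - real (nat \<lfloor>x * real n\<rfloor>) - 1) (nat \<lfloor>x * real n\<rfloor>))
      \<longlonglongrightarrow> sqrt (1 - x)"
    unfolding K_def .
qed

lemma shift_ratio_bounds:
  fixes d t \<delta> :: real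
  assumes "0 < \<delta>" "1 + \<delta> \<le> \<bar>d\<bar>" "0 \<le> t" "t \<le> 1"
  shows "d + t \<noteq> 0" and "\<bar>d / (d + t)\<bar> \<le> 1 + 1 / \<delta>"
proof -
  have "\<bar>d / (d + t)\<bar> \<le> 1 + 1 / \<delta> \<and> d + t \<noteq> 0"
  proof (cases "0 < d")
    case True
    then have "\<bar>d / (d + t)\<bar> \<le> 1" "d + t \<noteq> 0"
      using assms by (simp_all add: abs_of_pos divide_le_eq_1)
    moreover have "0 < 1 / \<delta>"
      using assms by simp
    ultimately show ?thesis
      by linarith
  next
    case False
    then have "\<delta> \<le> - d - t"
      using assms by linarith
    then have "\<bar>d / (d + t)\<bar> = 1 + t / (- d - t)"
      using assms by (simp add: abs_div field_simps)
    moreover have "t / (- d - t) \<le> 1 / \<delta>"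
      using \<open>\<delta> \<le> - d - t\<close> assms by (intro frac_le) auto
    ultimately show ?thesis
      using \<open>\<delta> \<le> - d - t\<close> assms(1) by (intro conjI) linarith+
  qed
  then show "d + t \<noteq> 0" and "\<bar>d / (d + t)\<bar> \<le> 1 + 1 / \<delta>"
    by auto
qed

lemma eventually_shift_ratio_bounded:
  fixes c :: "nat \<Rightarrow> real"
  assumes lim: "(\<lambda>n. c n / real n) \<longlonglongrightarrow> b" and b: "1 < \<bar>b\<bar>"
  obtains W where "eventually (\<lambda>n. \<forall>j\<le>n. c n + real j \<noteq> 0 \<and> \<bar>c n / (c n + real j)\<bar> \<le> W) sequentially"
proof
  define \<delta> where "\<delta> = (\<bar>b\<bar> - 1) / 2"
  have "0 < \<delta>" and "2 * \<delta> = \<bar>b\<bar> - 1"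
    using b by (simp_all add: \<delta>_def)
  show "eventually (\<lambda>n. \<forall>j\<le>n. c n + real j \<noteq> 0 \<and> \<bar>c n / (c n + real j)\<bar> \<le> 1 + 1 / \<delta>) sequentially"
    using tendstoD[OF lim \<open>0 < \<delta>\<close>] eventually_gt_at_top[of 0]
  proof eventually_elim
    case (elim n)
    have "1 + \<delta> \<le> \<bar>y\<bar>" if "\<bar>y - b\<bar> < \<delta>" for y
      using that \<open>2 * \<delta> = _\<close> by linarith
    then have "1 + \<delta> \<le> \<bar>c n / real n\<bar>"
      using elim(1) by (simp only: dist_real_def)
    show ?case
    proof (intro allI impI)
      fix j assume "j \<le> n"
      then have t: "0 \<le> real j / real n" "real j / real n \<le> 1"
        using elim(2) by (simp_all add: divide_le_eq_1)
      have "c n / (c n + real j) = (c n / real n) / (c n / real n + real j / real n)"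
        using elim(2) by (simp add: add_divide_distrib[symmetric])
      then show "c n + real j \<noteq> 0 \<and> \<bar>c n / (c n + real j)\<bar> \<le> 1 + 1 / \<delta>"
        using shift_ratio_bounds[OF \<open>0 < \<delta>\<close> \<open>1 + \<delta> \<le> _\<close> t] elim(2)
        by (auto simp: add_divide_distrib[symmetric])
    qed
  qed
qed

definition step_function :: "(nat \<Rightarrow> real) \<Rightarrow> nat \<Rightarrow> real \<Rightarrow> real" where
  "step_function a n x = (\<Sum>k<n. a k * indicator {real k / real n ..< real (Suc k) / real n} x)"

lemma integrable_step_function: "integrable lborel (step_function a n)"
  unfolding step_function_def
  by (intro Bochner_Integration.integrable_sum) (auto simp: divide_right_mono)

lemma integral_step_function: "integral\<^sup>L lborel (step_function a n) = (1 / real n) * (\<Sum>k<n. a k)"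
proof -
  have "integral\<^sup>L lborel (step_function a n) = (\<Sum>k<n. a k * (real (Suc k) / real n - real k / real n))"
    unfolding step_function_def
    by (subst Bochner_Integration.integral_sum) (auto simp: divide_right_mono)
  also have "\<dots> = (1 / real n) * (\<Sum>k<n. a k)"
    by (simp add: diff_divide_distrib[symmetric] sum_divide_distrib)
  finally show ?thesis .
qed

lemma step_function_eq:
  assumes "0 < n" "0 \<le> x" "x < 1"
  shows "step_function a n x = a (nat \<lfloor>x * real n\<rfloor>)"
proof -
  define K where "K = nat \<lfloor>x * real n\<rfloor>"
  have "K < n"
    using assms by (simp add: K_def nat_floor_mult_less)
  have "x \<in> {real k / real n ..< real (Suc k) / real n} \<longleftrightarrow> k = K" if "k < n" for k
  proof -
    have "x \<in> {real k / real n ..< real (Suc k) / real n} \<longleftrightarrow> \<lfloor>x * real n\<rfloor> = int k"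
      using that by (auto simp: field_simps floor_eq_iff)
    also have "\<dots> \<longleftrightarrow> k = K"
      using assms by (auto simp: K_def)
    finally show ?thesis .
  qed
  then have "step_function a n x = (\<Sum>k<n. if k = K then a k else 0)"
    unfolding step_function_def by (intro sum.cong) auto
  also have "\<dots> = a K"
    using \<open>K < n\<close> by simp
  finally show ?thesis
    unfolding K_def .
qed

lemma step_function_eq_0:
  assumes "x < 0 \<or> 1 \<le> x"
  shows "step_function a n x = 0"
proof -
  have "x \<notin> {real k / real n ..< real (Suc k) / real n}" if "k < n" for k
  proof -
    have "0 \<le> real k / real n" "real (Suc k) / real n \<le> 1"
      using that by (simp_all add: divide_le_eq_1)
    then show ?thesis
      using assms unfolding atLeastLessThan_iff by linarith
  qed
  then show ?thesis
    unfolding step_function_def by simp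
qed

text \<open>Dominated convergence for the step functions of \<open>a n\<close>, whose integrals are the averages.\<close>

lemma average_tendsto_set_integral:
  fixes a :: "nat \<Rightarrow> nat \<Rightarrow> real" and f h :: "real \<Rightarrow> real"
  assumes f: "set_borel_measurable lborel {0<..<1} f"
    and h: "set_integrable lborel {0<..<1} h"
    and lim: "\<And>x. 0 < x \<Longrightarrow> x < 1 \<Longrightarrow> (\<lambda>n. a n (nat \<lfloor>x * real n\<rfloor>)) \<longlonglongrightarrow> f x"
    and bound: "eventually (\<lambda>n. \<forall>x\<in>{0<..<1}. \<bar>a n (nat \<lfloor>x * real n\<rfloor>)\<bar> \<le> h x) sequentially"
  shows "(\<lambda>n. (1 / real n) * (\<Sum>k<n. a n k)) \<longlonglongrightarrow> (LINT x:{0<..<1}|lborel. f x)"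
proof -
  obtain N where N: "\<And>n x. N \<le> n \<Longrightarrow> 0 < x \<Longrightarrow> x < 1 \<Longrightarrow> \<bar>a n (nat \<lfloor>x * real n\<rfloor>)\<bar> \<le> h x"
    using bound unfolding eventually_sequentially by (meson greaterThanLessThan_iff)
  define s where "s i = step_function (a (i + Suc N)) (i + Suc N)" for i
  have s_eq: "s i x = a (i + Suc N) (nat \<lfloor>x * real (i + Suc N)\<rfloor>)" if "0 < x" "x < 1" for i x
    unfolding s_def using that by (intro step_function_eq) auto
  have s_eq_0: "s i x = 0" if "x \<notin> {0<..<1}" "x \<noteq> 0" for i x
    unfolding s_def using that by (intro step_function_eq_0) auto
  have "(\<lambda>i. integral\<^sup>L lborel (s i)) \<longlonglongrightarrow> (LINT x:{0<..<1}|lborel. f x)"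
    unfolding set_lebesgue_integral_def
  proof (rule integral_dominated_convergence)
    show "(\<lambda>x. indicator {0<..<1} x *\<^sub>R f x) \<in> borel_measurable lborel"
      using f unfolding set_borel_measurable_def .
    show "s i \<in> borel_measurable lborel" for i
      unfolding s_def by (rule borel_measurable_integrable[OF integrable_step_function])
    show "integrable lborel (\<lambda>x. indicator {0<..<1} x *\<^sub>R h x)"
      using h unfolding set_integrable_def .
    show "AE x in lborel. (\<lambda>i. s i x) \<longlonglongrightarrow> indicator {0<..<1} x *\<^sub>R f x"
      using AE_lborel_singleton[of 0]
    proof eventually_elim
      case (elim x)
      show ?case
      proof (cases "x \<in> {0<..<1}")
        case True
        then show ?thesis
          using LIMSEQ_ignore_initial_segment[OF lim, of x "Suc N"] by (simp add: s_eq)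
      qed (use elim s_eq_0 in auto)
    qed
    show "AE x in lborel. norm (s i x) \<le> indicator {0<..<1} x *\<^sub>R h x" for i
      using AE_lborel_singleton[of 0]
    proof eventually_elim
      case (elim x)
      show ?case
      proof (cases "x \<in> {0<..<1}")
        case True
        then show ?thesis
          using N[of "i + Suc N" x] by (simp add: s_eq)
      qed (use elim s_eq_0 in auto)
    qed
  qed
  then show ?thesis
    unfolding s_def integral_step_function by (rule LIMSEQ_offset)
qed

lemma set_integral_Ioo_FTC_nonneg:
  fixes f F :: "real \<Rightarrow> real"
  assumes "a < b" and "isCont F a" and "isCont F b"
    and "\<And>x. a < x \<Longrightarrow> x < b \<Longrightarrow> (F has_real_derivative f x) (at x)"
    and "\<And>x. a < x \<Longrightarrow> x < b \<Longrightarrow> isCont f x"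
    and "\<And>x. a < x \<Longrightarrow> x < b \<Longrightarrow> 0 \<le> f x"
  shows "set_integrable lborel {a<..<b} f"
    and "(LINT x:{a<..<b}|lborel. f x) = F b - F a"
proof -
  have "((F \<circ> real_of_ereal) \<longlongrightarrow> F a) (at_right (ereal a))"
    "((F \<circ> real_of_ereal) \<longlongrightarrow> F b) (at_left (ereal b))"
    unfolding ereal_tendsto_simps using assms(2,3)
    by (simp_all add: isCont_def filterlim_at_split)
  from interval_integral_FTC_nonneg[of "ereal a" "ereal b" F f, OF _ _ _ _ this] assms
  show "set_integrable lborel {a<..<b} f" "(LINT x:{a<..<b}|lborel. f x) = F b - F a"
    by (auto simp: interval_lebesgue_integral_def intro!: AE_I2)
qed

lemma set_integrable_inverse_sqrt_one_minus:
  "set_integrable lborel {0<..<1} (\<lambda>x. 1 / sqrt (1 - x))"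
proof (rule set_integral_Ioo_FTC_nonneg(1))
  show "((\<lambda>x. - 2 * sqrt (1 - x)) has_real_derivative 1 / sqrt (1 - x)) (at x)"
    if "0 < x" "x < 1" for x :: real
    using that by (auto intro!: derivative_eq_intros simp: divide_simps)
qed (auto intro!: continuous_intros)

lemma has_real_derivative_sqrt_one_minus_over_one_plus:
  fixes x :: real
  assumes "-1 < x" "x < 1"
  shows "((\<lambda>x. sqrt ((1 - x) / (1 + x))) has_real_derivative - 1 / ((1 + x) * sqrt (1 - x\<^sup>2))) (at x)"
proof -
  define q where "q = sqrt ((1 - x) / (1 + x))"
  have "q > 0"
    using assms by (simp add: q_def)
  have "q * (1 + x) = sqrt ((1 - x) / (1 + x) * (1 + x)\<^sup>2)"
    unfolding q_def real_sqrt_mult using assms by simp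
  also have "(1 - x) / (1 + x) * (1 + x)\<^sup>2 = 1 - x\<^sup>2"
    using assms by (simp add: field_simps power2_eq_square)
  finally have "sqrt (1 - x\<^sup>2) = q * (1 + x)" ..
  moreover have "((\<lambda>x. sqrt ((1 - x) / (1 + x))) has_real_derivative - 1 / ((1 + x) * (q * (1 + x)))) (at x)"
    using assms \<open>q > 0\<close> unfolding q_def
    by (auto intro!: derivative_eq_intros simp: field_simps power2_eq_square)
  ultimately show ?thesis by simp
qed

definition limit_density :: "real \<Rightarrow> real \<Rightarrow> real" where
  "limit_density b x = b / (b + x) / sqrt (1 - x\<^sup>2)"

text \<open>The antiderivative comes from the substitution \<open>u = sqrt ((1 - x) / (1 + x))\<close>.\<close>

lemma has_real_derivative_arctan_antiderivative:
  fixes b s x :: real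
  assumes s: "s \<noteq> 0" "s\<^sup>2 * (b + 1) = b - 1" and x: "-1 < x" "x < 1" and "b + x \<noteq> 0"
  shows "((\<lambda>x. - 2 * b / ((b + 1) * s) * arctan (s * sqrt ((1 - x) / (1 + x))))
           has_real_derivative limit_density b x) (at x)"
proof -
  have "b + 1 \<noteq> 0"
    using s by auto
  have "1 + (s * sqrt ((1 - x) / (1 + x)))\<^sup>2 = ((b + 1) * (1 + x) + s\<^sup>2 * (b + 1) * (1 - x)) / ((b + 1) * (1 + x))"
    using x \<open>b + 1 \<noteq> 0\<close> by (simp add: power_mult_distrib add_divide_distrib)
  also have "\<dots> = 2 * (b + x) / ((b + 1) * (1 + x))"
    unfolding s(2) by (simp add: algebra_simps)
  finally have denom: "1 + (s * sqrt ((1 - x) / (1 + x)))\<^sup>2 = 2 * (b + x) / ((b + 1) * (1 + x))" .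
  define w where "w = sqrt (1 - x\<^sup>2)"
  have "w > 0"
    using x by (simp add: w_def abs_square_less_1)
  then have "- 2 * b / ((b + 1) * s) *
      (inverse (1 + (s * sqrt ((1 - x) / (1 + x)))\<^sup>2) * (s * (- 1 / ((1 + x) * w))))
      = limit_density b x"
    unfolding limit_density_def denom w_def[symmetric]
    using x s \<open>b + 1 \<noteq> 0\<close> \<open>b + x \<noteq> 0\<close> by (simp add: divide_simps)
  then show ?thesis
    using DERIV_cmult[OF DERIV_chain2[OF DERIV_arctan
            DERIV_cmult[OF has_real_derivative_sqrt_one_minus_over_one_plus[OF x], of s]],
          of "- 2 * b / ((b + 1) * s)"]
    by (simp add: w_def divide_inverse)
qed

lemma limit_density_nonneg:
  assumes "\<bar>b\<bar> > 1" "0 < x" "x < 1"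
  shows "0 \<le> limit_density b x"
proof -
  have "0 \<le> b / (b + x)"
    using assms by (cases "b > 0") (auto simp: divide_nonneg_pos divide_nonpos_neg)
  moreover have "0 < sqrt (1 - x\<^sup>2)"
    using assms by (simp add: abs_square_less_1)
  ultimately show ?thesis
    unfolding limit_density_def by (rule divide_nonneg_pos)
qed

lemma set_integral_limit_density:
  fixes b :: real
  assumes b: "\<bar>b\<bar> > 1"
  shows "set_integrable lborel {0<..<1} (limit_density b)"
    and "(LINT x:{0<..<1}|lborel. limit_density b x)
           = 2 * b / (b + 1) * sqrt ((b + 1) / (b - 1)) * arctan (sqrt ((b - 1) / (b + 1)))"
proof -
  define s where "s = sqrt ((b - 1) / (b + 1))"
  define F where "F x = - 2 * b / ((b + 1) * s) * arctan (s * sqrt ((1 - x) / (1 + x)))" for x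
  have "(b - 1) / (b + 1) > 0"
    using b by (cases "b > 0") (auto simp: divide_pos_pos divide_neg_neg)
  then have "s > 0" and "s\<^sup>2 = (b - 1) / (b + 1)" and "1 / s = sqrt ((b + 1) / (b - 1))"
    by (simp_all add: s_def) (simp add: real_sqrt_divide)
  then have s2: "s\<^sup>2 * (b + 1) = b - 1"
    using b by (auto simp: field_simps)
  have "isCont F x" if "x > -1" for x
    using that unfolding F_def by (intro continuous_intros) auto
  moreover have "(F has_real_derivative limit_density b x) (at x)" if "0 < x" "x < 1" for x
    unfolding F_def using that b \<open>s > 0\<close> s2
    by (intro has_real_derivative_arctan_antiderivative) auto
  moreover have "isCont (limit_density b) x" if "0 < x" "x < 1" for x
    unfolding limit_density_def using that b by (intro continuous_intros) (auto simp: power2_eq_1_iff)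
  ultimately have "set_integrable lborel {0<..<1} (limit_density b)"
    and "(LINT x:{0<..<1}|lborel. limit_density b x) = F 1 - F 0"
    using set_integral_Ioo_FTC_nonneg[of 0 1 F "limit_density b"] limit_density_nonneg[OF b] by auto
  moreover have "F 1 - F 0 = 2 * b / (b + 1) * (1 / s) * arctan s"
    by (simp add: F_def)
  ultimately show "set_integrable lborel {0<..<1} (limit_density b)"
    and "(LINT x:{0<..<1}|lborel. limit_density b x)
           = 2 * b / (b + 1) * sqrt ((b + 1) / (b - 1)) * arctan (sqrt ((b - 1) / (b + 1)))"
    unfolding \<open>1 / s = _\<close> unfolding s_def by simp_all
qed

definition hyp_summand :: "(nat \<Rightarrow> real) \<Rightarrow> nat \<Rightarrow> nat \<Rightarrow> real" where
  "hyp_summand c n k = hyp_term [1, real n + 1/2, 1 - real n, c n] [real n + 1, 3/2 - real n, c n + 1] 1 k"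

lemma hyp_summand_eq:
  assumes "\<forall>j\<le>k. c n + real j \<noteq> 0"
  shows "hyp_summand c n k
           = c n / (c n + real k) * poch_half_ratio (real n) k / poch_half_ratio (real n - real k - 1) k"
  unfolding hyp_summand_def using assms by (intro hyp_term_eq_poch_half_ratio) auto

lemma hyp_summand_tendsto:
  fixes c :: "nat \<Rightarrow> real"
  assumes lim: "(\<lambda>n. c n / real n) \<longlonglongrightarrow> b" and b: "1 < \<bar>b\<bar>" and x: "0 < x" "x < 1"
  shows "(\<lambda>n. hyp_summand c n (nat \<lfloor>x * real n\<rfloor>)) \<longlonglongrightarrow> limit_density b x"
proof -
  define K where "K n = nat \<lfloor>x * real n\<rfloor>" for n
  have K: "(\<lambda>n. real (K n) / real n) \<longlonglongrightarrow> x"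
    unfolding K_def using x by (intro nat_floor_mult_divide_tendsto) simp
  obtain W where W: "eventually (\<lambda>n. \<forall>j\<le>n. c n + real j \<noteq> 0 \<and> \<bar>c n / (c n + real j)\<bar> \<le> W) sequentially"
    using eventually_shift_ratio_bounded[OF lim b] .
  have "b + x \<noteq> 0"
    using b x by auto
  have "(\<lambda>n. (c n / real n) / (c n / real n + real (K n) / real n)) \<longlonglongrightarrow> b / (b + x)"
    using lim K \<open>b + x \<noteq> 0\<close> by (intro tendsto_intros)
  then have ratio: "(\<lambda>n. c n / (c n + real (K n))) \<longlonglongrightarrow> b / (b + x)"
    by (rule Lim_transform_eventually)
      (use eventually_gt_at_top[of 0] in \<open>eventually_elim, simp add: add_divide_distrib[symmetric]\<close>)
  have upper: "(\<lambda>n. poch_half_ratio (real n) (K n)) \<longlonglongrightarrow> sqrt (1 / (1 + x))"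
    and lower: "(\<lambda>n. poch_half_ratio (real n - real (K n) - 1) (K n)) \<longlonglongrightarrow> sqrt (1 - x)"
    unfolding K_def using poch_half_ratio_floor_tendsto[of x] x by simp_all
  have "(\<lambda>n. c n / (c n + real (K n)) * poch_half_ratio (real n) (K n) / poch_half_ratio (real n - real (K n) - 1) (K n))
          \<longlonglongrightarrow> b / (b + x) * sqrt (1 / (1 + x)) / sqrt (1 - x)"
    using tendsto_divide[OF tendsto_mult[OF ratio upper] lower] x by simp
  moreover have "b / (b + x) * sqrt (1 / (1 + x)) / sqrt (1 - x) = limit_density b x"
    unfolding limit_density_def using x by (simp add: power2_eq_square real_sqrt_divide algebra_simps flip: real_sqrt_mult)
  moreover have "eventually (\<lambda>n. c n / (c n + real (K n)) * poch_half_ratio (real n) (K n)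
      / poch_half_ratio (real n - real (K n) - 1) (K n) = hyp_summand c n (K n)) sequentially"
    using W eventually_gt_at_top[of 0]
  proof eventually_elim
    case (elim n)
    then have "K n < n"
      unfolding K_def using x by (intro nat_floor_mult_less)
    with elim(1) show ?case
      by (intro hyp_summand_eq[symmetric]) auto
  qed
  ultimately show ?thesis
    unfolding K_def by (auto intro: Lim_transform_eventually)
qed

lemma hyp_summand_bound:
  fixes c :: "nat \<Rightarrow> real"
  assumes ratio: "\<forall>j\<le>n. c n + real j \<noteq> 0 \<and> \<bar>c n / (c n + real j)\<bar> \<le> W"
    and "0 < n" and x: "0 < x" "x < 1"
  shows "\<bar>hyp_summand c n (nat \<lfloor>x * real n\<rfloor>)\<bar> \<le> 2 * W / sqrt (1 - x)"
proof -
  define K where "K = nat \<lfloor>x * real n\<rfloor>"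
  have "K < n" "real K \<le> x * real n"
    using assms of_nat_floor[of "x * real n"] by (simp_all add: K_def nat_floor_mult_less)
  then have "real K + 1 \<le> real n"
    by (metis Suc_leI of_nat_Suc of_nat_le_iff add.commute)
  define a where "a = real n - real K - 1"
  have "0 \<le> a"
    using \<open>K < n\<close> by (simp add: a_def)
  have "(a + real K + 1/4) / (a + 1/4) \<le> real n / ((real n - x * real n) / 4)"
    using \<open>real K + 1 \<le> real n\<close> \<open>real K \<le> x * real n\<close> x \<open>0 < n\<close> unfolding a_def
    by (intro frac_le) (auto simp: field_simps)
  also have "\<dots> = 4 / (1 - x)"
    using \<open>0 < n\<close> x by (simp add: field_simps)
  finally have "inverse (poch_half_ratio a K) \<le> sqrt (4 / (1 - x))"
    using inverse_poch_half_ratio_le[OF \<open>0 \<le> a\<close>, of K] real_sqrt_le_mono order_trans by blast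
  also have "\<dots> = 2 / sqrt (1 - x)"
    by (simp add: real_sqrt_divide)
  finally have inv: "inverse (poch_half_ratio a K) \<le> 2 / sqrt (1 - x)" .
  have "\<bar>hyp_summand c n K\<bar> = \<bar>c n / (c n + real K)\<bar> * poch_half_ratio (real n) K * inverse (poch_half_ratio a K)"
    using ratio \<open>K < n\<close> \<open>0 \<le> a\<close> poch_half_ratio_bounds(1)[of "real n" K] poch_half_ratio_bounds(1)[of a K]
    by (simp add: hyp_summand_eq a_def abs_mult divide_inverse)
  also have "\<dots> \<le> W * 1 * (2 / sqrt (1 - x))"
    using ratio \<open>K < n\<close> inv \<open>0 \<le> a\<close> poch_half_ratio_le_1[of "real n" K]
      poch_half_ratio_bounds(1)[of a K] poch_half_ratio_bounds(1)[of "real n" K]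
    by (intro mult_mono) auto
  finally show ?thesis
    by (simp add: K_def mult.commute)
qed

theorem lemma18:
  fixes b :: real and r :: nat and bn :: "nat \<Rightarrow> real"
  assumes "\<bar>b\<bar> > 1"
    and "bn \<longlonglongrightarrow> b"
  shows "(\<lambda>n. (1 / real n) *
            hyp_sum [1, real n + 1/2, 1 - real n, bn n * real n + real r]
                    [real n + 1, 3/2 - real n, bn n * real n + real r + 1] 1 n)
         \<longlonglongrightarrow> 2 * b / (b + 1) * sqrt ((b + 1) / (b - 1)) * arctan (sqrt ((b - 1) / (b + 1)))"
proof -
  define c where "c n = bn n * real n + real r" for n
  have "(\<lambda>n. bn n + real r * inverse (real n)) \<longlonglongrightarrow> b"
    using tendsto_add[OF assms(2) tendsto_mult[OF tendsto_const lim_inverse_n]] by simp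
  then have lim: "(\<lambda>n. c n / real n) \<longlonglongrightarrow> b"
    by (rule Lim_transform_eventually)
      (use eventually_gt_at_top[of 0] in \<open>eventually_elim, simp add: c_def field_simps\<close>)
  obtain W where W: "eventually (\<lambda>n. \<forall>j\<le>n. c n + real j \<noteq> 0 \<and> \<bar>c n / (c n + real j)\<bar> \<le> W) sequentially"
    using eventually_shift_ratio_bounded[OF lim assms(1)] .
  have "(\<lambda>n. (1 / real n) * (\<Sum>k<n. hyp_summand c n k)) \<longlonglongrightarrow> (LINT x:{0<..<1}|lborel. limit_density b x)"
  proof (rule average_tendsto_set_integral)
    show "set_borel_measurable lborel {0<..<1} (limit_density b)"
      using set_integral_limit_density(1)[OF assms(1)]
      unfolding set_integrable_def set_borel_measurable_def by (rule borel_measurable_integrable)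
    have "set_integrable lborel {0<..<1} (\<lambda>x. 2 * W * (1 / sqrt (1 - x)))"
      by (intro set_integrable_mult_right set_integrable_inverse_sqrt_one_minus)
    then show "set_integrable lborel {0<..<1} (\<lambda>x. 2 * W / sqrt (1 - x))"
      by simp
    show "(\<lambda>n. hyp_summand c n (nat \<lfloor>x * real n\<rfloor>)) \<longlonglongrightarrow> limit_density b x" if "0 < x" "x < 1" for x
      using hyp_summand_tendsto[OF lim assms(1) that] .
    show "eventually (\<lambda>n. \<forall>x\<in>{0<..<1}.
        \<bar>hyp_summand c n (nat \<lfloor>x * real n\<rfloor>)\<bar> \<le> 2 * W / sqrt (1 - x)) sequentially"
      using W eventually_gt_at_top[of 0] by eventually_elim (use hyp_summand_bound in auto)
  qed
  then show ?thesis
    unfolding set_integral_limit_density(2)[OF assms(1)] hyp_sum_def hyp_summand_def c_def .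
qed

end
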